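(* Let $p\ge 2$ be an integer and let $A\in GL_n(\mathbb{C}(\{z\}))$ be such that the Mahler system $\phi_p(Y)=AY$ is Fuchsian at $0$. Then there exists a unique $F\in GL_n(\mathbb{C}[[z]])$ with $F(0)=I_n$ and $\phi_p(F)^{-1}AF=A(0)$. Moreover $F\in GL_n(\mathbb{C}\{z\})$, and if $A\in GL_n(\mathbb{C}(z))$ then $F\in GL_n(\mathcal{M}(D(0,1)))$.
   Context: $\phi_p$ acts entrywise by $f(z)\mapsto f(z^p)$. $\mathbb{C}\{z\}$ denotes convergent power series at $0$ and $\mathbb{C}(\{z\})$ its fraction field. The system $\phi_p(Y)=AY$ is Fuchsian at $0$ if $A$ is regular at $0$, i.e. its entries are analytic at $0$ and $A(0)\in GL_n(\mathbb{C})$. $\mathcal{M}(D(0,1))$ is the field of meromorphic functions on the open unit disk. *)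

theory Defs
  imports "HOL-Analysis.Analysis" "HOL-Complex_Analysis.Complex_Analysis"
    "HOL-Computational_Algebra.Computational_Algebra"
begin

definition mahler_fps :: "nat \<Rightarrow> complex fps \<Rightarrow> complex fps" where
  "mahler_fps p f = fps_compose f (fps_X ^ p)"

definition mahler_mat :: "nat \<Rightarrow> complex fps ^'n^'m \<Rightarrow> complex fps ^'n^'m" where
  "mahler_mat p M = (\<chi> i j. mahler_fps p (M $ i $ j))"

definition mat_at0 :: "complex fps ^'n^'m \<Rightarrow> complex ^'n^'m" where
  "mat_at0 M = (\<chi> i j. fps_nth (M $ i $ j) 0)"

definition const_mat :: "complex ^'n^'m \<Rightarrow> complex fps ^'n^'m" where
  "const_mat C = (\<chi> i j. fps_const (C $ i $ j))"

definition convergent_fps :: "complex fps \<Rightarrow> bool" where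
  "convergent_fps f \<longleftrightarrow> fps_conv_radius f > 0"

text \<open>Power series that are (expansions of) rational functions, i.e. elements of C(z) \<inter> C[[z]].\<close>
definition rational_fps :: "complex fps \<Rightarrow> bool" where
  "rational_fps f \<longleftrightarrow> (\<exists>P Q :: complex poly. Q \<noteq> 0 \<and> f * fps_of_poly Q = fps_of_poly P)"

end

theory Submission
  imports Defs
begin

(* Comparing coefficients of A F = phi_p(F) A(0) gives
     A_0 F_m + (sum k<m. A_(m-k) F_k) = [p divides m] F_(m/p) A_0,
   which determines F_m from F_0 = I and the earlier coefficients: existence and uniqueness.
   If |A_k| <= M r^k, the same recursion gives |F_m| <= c (sum k<m. r^(m-k) |F_k|), so the
   coefficients of F grow at most geometrically and F converges; so does its inverse
   adj(F) / det F, because det F(0) = 1.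
   For rational A = R / D the functional equation reads F(z) = D(z) R(z)^(-1) F(z^p) A(0). Starting
   from a disc |z| < rho on which F converges, it continues F meromorphically to the discs
   |z|^(p^N) < rho, whose union is the unit disc. *)

definition coeff_mat :: "'a fps^'n^'m \<Rightarrow> nat \<Rightarrow> 'a^'n^'m" where
  "coeff_mat X k = (\<chi> i j. fps_nth (X $ i $ j) k)"

definition fps_mat_of_coeffs :: "(nat \<Rightarrow> 'a^'n^'m) \<Rightarrow> 'a fps^'n^'m" where
  "fps_mat_of_coeffs c = (\<chi> i j. Abs_fps (\<lambda>k. c k $ i $ j))"

lemma coeff_mat_fps_mat_of_coeffs [simp]: "coeff_mat (fps_mat_of_coeffs c) = c"
  by (rule ext) (simp add: coeff_mat_def fps_mat_of_coeffs_def vec_eq_iff)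

lemma fps_mat_eqI: "(\<And>k. coeff_mat X k = coeff_mat Y k) \<Longrightarrow> X = Y"
  by (simp add: coeff_mat_def vec_eq_iff fps_eq_iff)

lemma coeff_mat_0: "coeff_mat X 0 = mat_at0 X"
  by (simp add: coeff_mat_def mat_at0_def)

lemma coeff_mat_mult:
  fixes X :: "'a::comm_semiring_1 fps^'k^'m" and Y :: "'a fps^'n^'k"
  shows "coeff_mat (X ** Y) m =
    coeff_mat X 0 ** coeff_mat Y m + (\<Sum>k<m. coeff_mat X (m - k) ** coeff_mat Y k)"
proof -
  have "coeff_mat (X ** Y) m $ i $ j = (\<Sum>k\<le>m. coeff_mat X (m - k) ** coeff_mat Y k) $ i $ j" for i j
  proof -
    have nth: "fps_nth (f * g) m = (\<Sum>k\<le>m. fps_nth f (m - k) * fps_nth g k)" for f g :: "'a fps"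
      unfolding mult.commute[of f g] fps_mult_nth atLeast0AtMost by (simp add: mult.commute)
    have "coeff_mat (X ** Y) m $ i $ j =
        (\<Sum>l\<in>UNIV. \<Sum>k\<le>m. fps_nth (X $ i $ l) (m - k) * fps_nth (Y $ l $ j) k)"
      by (simp add: coeff_mat_def matrix_matrix_mult_def fps_sum_nth nth)
    also have "\<dots> = (\<Sum>k\<le>m. coeff_mat X (m - k) ** coeff_mat Y k) $ i $ j"
      by (subst sum.swap) (simp add: coeff_mat_def matrix_matrix_mult_def)
    finally show ?thesis .
  qed
  then show ?thesis
    by (simp add: vec_eq_iff lessThan_Suc_atMost[symmetric] add.commute)
qed

lemma coeff_mat_const_mat_right: "coeff_mat (X ** const_mat C) m = coeff_mat X m ** C"
  by (simp add: coeff_mat_def const_mat_def matrix_matrix_mult_def fps_sum_nth vec_eq_iff)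

lemma fps_compose_X_power_nth:
  fixes f :: "'a::comm_ring_1 fps"
  assumes "p > 0"
  shows "fps_nth (f oo fps_X ^ p) m = (if p dvd m then fps_nth f (m div p) else 0)"
proof -
  have "fps_nth (f oo fps_X ^ p) m = (\<Sum>i=0..m. if p dvd m \<and> i = m div p then fps_nth f i else 0)"
    unfolding fps_compose_nth power_mult[symmetric]
    by (intro sum.cong refl) (use assms in \<open>auto simp: mult.commute\<close>)
  also have "\<dots> = (if p dvd m then fps_nth f (m div p) else 0)"
    by (auto simp: sum.delta' div_le_dividend)
  finally show ?thesis .
qed

lemma coeff_mat_mahler_mat:
  assumes "p > 0"
  shows "coeff_mat (mahler_mat p X) m = (if p dvd m then coeff_mat X (m div p) else 0)"
  using assms
  by (simp add: coeff_mat_def mahler_mat_def mahler_fps_def fps_compose_X_power_nth vec_eq_iff)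

lemma mat_at0_mahler_mat: "p > 0 \<Longrightarrow> mat_at0 (mahler_mat p X) = mat_at0 X"
  using coeff_mat_mahler_mat[of p X 0] by (simp add: coeff_mat_0)

lemma det_mat: "det (mat d :: 'a::comm_ring_1^'n^'n) = d ^ CARD('n)"
proof -
  have "mat d = (\<chi> i. d *s (mat 1 :: 'a^'n^'n) $ i)"
    by (simp add: vec_eq_iff mat_def)
  then show ?thesis
    using det_rows_mul[of "\<lambda>_. d" "\<lambda>i. (mat 1 :: 'a^'n^'n) $ i"] by simp
qed

lemma det_map:
  fixes h :: "'a::comm_ring_1 \<Rightarrow> 'b::comm_ring_1"
  assumes add: "\<And>x y. h (x + y) = h x + h y" and mult: "\<And>x y. h (x * y) = h x * h y"
    and one: "h 1 = 1"
  shows "h (det A) = det (\<chi> i j. h (A $ i $ j))"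
proof -
  have zero: "h 0 = 0"
    using add[of 0 0] by simp
  have neg: "h (- x) = - h x" for x
    using add[of "- x" x] zero by (simp add: eq_neg_iff_add_eq_0)
  have sum: "h (sum f S) = (\<Sum>x\<in>S. h (f x))" for f :: "('n \<Rightarrow> 'n) \<Rightarrow> 'a" and S
    by (induction S rule: infinite_finite_induct) (simp_all add: add zero)
  have prod: "h (prod f S) = (\<Prod>x\<in>S. h (f x))" for f :: "'n \<Rightarrow> 'a" and S
    by (induction S rule: infinite_finite_induct) (simp_all add: mult one)
  have sign: "h (of_int (sign q)) = of_int (sign q)" for q :: "'n \<Rightarrow> 'n"
    by (simp add: sign_def one neg)
  show ?thesis
    unfolding det_def sum mult prod sign by simp
qed

(* Entry (j, i) is the (i, j) cofactor, computed by replacing row i with the j-th unit vector. *)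
definition adjugate :: "'a::comm_ring_1^'n^'n \<Rightarrow> 'a^'n^'n" where
  "adjugate A = (\<chi> j i. det (\<chi> r. if r = i then axis j 1 else A $ r))"

lemma adjugate_map:
  fixes h :: "'a::comm_ring_1 \<Rightarrow> 'b::comm_ring_1"
  assumes "\<And>x y. h (x + y) = h x + h y" and "\<And>x y. h (x * y) = h x * h y" and "h 1 = 1"
  shows "(\<chi> i j. h (adjugate A $ i $ j)) = adjugate (\<chi> i j. h (A $ i $ j))"
proof -
  have "h 0 = 0"
    using assms(1)[of 0 0] by simp
  then have "(\<chi> r c. h ((if r = i then axis j 1 else A $ r) $ c)) =
      (\<chi> r. if r = i then axis j 1 else (\<chi> i j. h (A $ i $ j)) $ r)" for i j
    by (simp add: vec_eq_iff axis_def assms(3))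
  then show ?thesis
    unfolding adjugate_def by (simp add: det_map[OF assms] vec_eq_iff)
qed

definition eval_poly_mat :: "'a::comm_ring_1 poly^'n^'m \<Rightarrow> 'a \<Rightarrow> 'a^'n^'m" where
  "eval_poly_mat R z = (\<chi> i j. poly (R $ i $ j) z)"

lemma det_eval_poly_mat: "det (eval_poly_mat R z) = poly (det R) z"
  unfolding eval_poly_mat_def by (rule det_map[symmetric]) simp_all

lemma adjugate_eval_poly_mat: "adjugate (eval_poly_mat R z) = eval_poly_mat (adjugate R) z"
  unfolding eval_poly_mat_def by (rule adjugate_map[symmetric]) simp_all

lemma matrix_mul_adjugate: "A ** adjugate A = mat (det A)"
proof -
  have "(A ** adjugate A) $ l $ i = (if l = i then det A else 0)" for l i
  proof -
    have "(A ** adjugate A) $ l $ i =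
        (\<Sum>j\<in>UNIV. det (\<chi> r. if r = i then A $ l $ j *s axis j 1 else A $ r))"
      by (simp add: matrix_matrix_mult_def adjugate_def det_row_mul)
    also have "\<dots> = det (\<chi> r. if r = i then (\<Sum>j\<in>UNIV. A $ l $ j *s axis j 1) else A $ r)"
      using det_linear_row_sum[of UNIV i "\<lambda>_ j. A $ l $ j *s axis j 1" "\<lambda>r. A $ r"] by simp
    also have "\<dots> = det (\<chi> r. if r = i then A $ l else A $ r)"
      unfolding basis_expansion ..
    also have "\<dots> = (if l = i then det A else 0)"
    proof (cases "l = i")
      case True
      then have "(\<chi> r. if r = i then A $ l else A $ r) = A"
        by (simp add: vec_eq_iff)
      then show ?thesis
        using True by simp
    next
      case False
      then show ?thesis
        by (intro trans[OF det_identical_rows[of l i]]) (auto simp: row_def vec_eq_iff)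
    qed
    finally show ?thesis .
  qed
  then show ?thesis
    by (simp add: vec_eq_iff mat_def)
qed

lemma mat_matrix_mul: "mat c ** M = (\<chi> i j. c * M $ i $ j)"
  by (simp add: vec_eq_iff matrix_matrix_mult_def mat_def if_distrib[where f="\<lambda>x. x * _"]
      cong: if_cong)

lemma matrix_mul_mat: "M ** mat c = (\<chi> i j. M $ i $ j * c)"
  by (simp add: vec_eq_iff matrix_matrix_mult_def mat_def if_distrib[where f="\<lambda>x. _ * x"]
      cong: if_cong)

lemma adjugate_inverse:
  fixes A :: "'a::comm_ring_1^'n^'n"
  assumes "det A * d = 1"
  shows "A ** (mat d ** adjugate A) = mat 1" and "(mat d ** adjugate A) ** A = mat 1"
proof -
  have right: "M ** (mat d ** adjugate M) = mat 1" if "det M * d = 1" for M :: "'a^'n^'n"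
  proof -
    have "M ** (mat d ** adjugate M) = mat d ** (M ** adjugate M)"
      unfolding mat_matrix_mul
      by (simp add: matrix_matrix_mult_def vec_eq_iff sum_distrib_left mult.left_commute)
    also have "\<dots> = mat 1"
      using that unfolding matrix_mul_adjugate mat_matrix_mul
      by (simp add: vec_eq_iff mat_def mult.commute)
    finally show ?thesis .
  qed
  then show right_A: "A ** (mat d ** adjugate A) = mat 1"
    using assms .
  define L where "L = transpose (mat d ** adjugate (transpose A))"
  have "transpose A ** (mat d ** adjugate (transpose A)) = mat 1"
    by (rule right) (simp add: assms)
  then have "transpose (transpose A ** (mat d ** adjugate (transpose A))) = mat 1"
    by simp
  then have left_A: "L ** A = mat 1"
    unfolding L_def by (simp add: matrix_transpose_mul)
  (* a left inverse, obtained by transposition, coincides with the right inverse *)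
  have "L = L ** (A ** (mat d ** adjugate A))"
    by (simp add: right_A)
  also have "\<dots> = mat d ** adjugate A"
    by (simp add: matrix_mul_assoc left_A)
  finally show "(mat d ** adjugate A) ** A = mat 1"
    using left_A by simp
qed

lemma matrix_inv:
  fixes M :: "'a::semiring_1^'n^'n"
  assumes "invertible M"
  shows "M ** matrix_inv M = mat 1" and "matrix_inv M ** M = mat 1"
  using someI_ex[OF assms[unfolded invertible_def]] by (simp_all add: matrix_inv_def)

lemma matrix_inv_mult_eq_iff:
  fixes M :: "'a::semiring_1^'n^'n"
  assumes "invertible M"
  shows "matrix_inv M ** X = Y \<longleftrightarrow> X = M ** Y"
proof
  assume "matrix_inv M ** X = Y"
  then have "M ** (matrix_inv M ** X) = M ** Y"
    by simp
  then show "X = M ** Y"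
    by (simp add: matrix_mul_assoc matrix_inv[OF assms])
next
  assume "X = M ** Y"
  then show "matrix_inv M ** X = Y"
    by (simp add: matrix_mul_assoc matrix_inv[OF assms])
qed

lemma invertible_mat_1: "invertible (mat 1 :: 'a::semiring_1^'n^'n)"
  unfolding invertible_def by (intro exI[of _ "mat 1"]) simp

lemma mult_add_eq_iff_matrix_inv:
  fixes M :: "'a::ring_1^'n^'n"
  assumes "invertible M"
  shows "M ** X + S = T \<longleftrightarrow> X = matrix_inv M ** (T - S)"
  using matrix_inv_mult_eq_iff[OF assms, of "T - S" X] by (auto simp: eq_diff_eq)

lemma det_mat_at0: "det (mat_at0 X) = fps_nth (det X) 0"
  unfolding mat_at0_def by (rule det_map[symmetric]) simp_all

lemma fps_mat_inverse:
  fixes X :: "complex fps^'n^'n"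
  assumes "invertible (mat_at0 X)"
  shows "X ** (mat (inverse (det X)) ** adjugate X) = mat 1"
    and "(mat (inverse (det X)) ** adjugate X) ** X = mat 1"
proof -
  have "det X * inverse (det X) = 1"
    using assms by (intro inverse_mult_eq_1') (simp add: invertible_det_nz det_mat_at0[symmetric])
  then show "X ** (mat (inverse (det X)) ** adjugate X) = mat 1"
    and "(mat (inverse (det X)) ** adjugate X) ** X = mat 1"
    by (rule adjugate_inverse)+
qed

lemma invertible_if_invertible_mat_at0:
  fixes X :: "complex fps^'n^'n"
  assumes "invertible (mat_at0 X)"
  shows "invertible X"
  using fps_mat_inverse[OF assms] unfolding invertible_def by blast

section \<open>The formal solution\<close>

(* The guard m div p < m only ensures termination; it holds for all m > 0 when p >= 2. *)
fun mahler_solution_coeff :: "nat \<Rightarrow> (nat \<Rightarrow> 'a::ring_1^'n^'n) \<Rightarrow> nat \<Rightarrow> 'a^'n^'n" where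
  "mahler_solution_coeff p a m =
    (if m = 0 then mat 1
     else matrix_inv (a 0) **
       ((if p dvd m \<and> m div p < m then mahler_solution_coeff p a (m div p) ** a 0 else 0)
        - (\<Sum>k<m. a (m - k) ** mahler_solution_coeff p a k)))"

declare mahler_solution_coeff.simps [simp del]

definition mahler_solution :: "nat \<Rightarrow> complex fps^'n^'n \<Rightarrow> complex fps^'n^'n" where
  "mahler_solution p A = fps_mat_of_coeffs (mahler_solution_coeff p (coeff_mat A))"

lemma mahler_equation_coeff_iff:
  fixes A F :: "complex fps^'n^'n"
  assumes "p \<ge> 2" and "m > 0" and "invertible (mat_at0 A)"
  shows "coeff_mat (A ** F) m = coeff_mat (mahler_mat p F ** const_mat (mat_at0 A)) m \<longleftrightarrow>
    coeff_mat F m = matrix_inv (coeff_mat A 0) **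
      ((if p dvd m \<and> m div p < m then coeff_mat F (m div p) ** coeff_mat A 0 else 0)
       - (\<Sum>k<m. coeff_mat A (m - k) ** coeff_mat F k))"
proof -
  have "m div p < m" and "p > 0"
    using assms by simp_all
  then show ?thesis
    using assms unfolding coeff_mat_const_mat_right coeff_mat_mahler_mat[OF \<open>p > 0\<close>]
    unfolding coeff_mat_mult by (simp add: mult_add_eq_iff_matrix_inv coeff_mat_0)
qed

lemma mahler_solution_unique:
  fixes A F :: "complex fps^'n^'n"
  assumes "p \<ge> 2" and "invertible (mat_at0 A)"
    and F0: "mat_at0 F = mat 1" and eq: "A ** F = mahler_mat p F ** const_mat (mat_at0 A)"
  shows "F = mahler_solution p A"
proof -
  let ?s = "mahler_solution_coeff p (coeff_mat A)"
  have "coeff_mat F m = ?s m" for m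
  proof (induction m rule: less_induct)
    case (less m)
    show ?case
    proof (cases "m = 0")
      case True
      then show ?thesis
        using F0 by (simp add: coeff_mat_0 mahler_solution_coeff.simps)
    next
      case False
      have "(\<Sum>k<m. coeff_mat A (m - k) ** coeff_mat F k) = (\<Sum>k<m. coeff_mat A (m - k) ** ?s k)"
        using less by (intro sum.cong) simp_all
      moreover have "m div p < m \<Longrightarrow> coeff_mat F (m div p) = ?s (m div p)"
        by (rule less)
      ultimately show ?thesis
        using eq mahler_equation_coeff_iff[OF assms(1) _ assms(2), of m F] False
        by (simp add: mahler_solution_coeff.simps[of p _ m])
    qed
  qed
  then show ?thesis
    unfolding mahler_solution_def by (intro fps_mat_eqI) simp
qed

lemma mahler_solution_solves:
  fixes A :: "complex fps^'n^'n"
  assumes "p \<ge> 2" and "invertible (mat_at0 A)"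
  shows "mat_at0 (mahler_solution p A) = mat 1"
    and "A ** mahler_solution p A = mahler_mat p (mahler_solution p A) ** const_mat (mat_at0 A)"
proof -
  let ?F = "mahler_solution p A"
  have coeffs: "coeff_mat ?F = mahler_solution_coeff p (coeff_mat A)"
    by (simp add: mahler_solution_def)
  then show "mat_at0 ?F = mat 1"
    by (simp add: coeff_mat_0[symmetric] mahler_solution_coeff.simps)
  have "coeff_mat (A ** ?F) m = coeff_mat (mahler_mat p ?F ** const_mat (mat_at0 A)) m" for m
  proof (cases "m = 0")
    case True
    have "p > 0"
      using assms(1) by simp
    then show ?thesis
      using True unfolding coeff_mat_const_mat_right coeff_mat_mahler_mat[OF \<open>p > 0\<close>]
      unfolding coeff_mat_mult by (simp add: coeffs coeff_mat_0 mahler_solution_coeff.simps)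
  next
    case False
    then show ?thesis
      using mahler_equation_coeff_iff[OF assms(1) _ assms(2), of m ?F] coeffs
      by (simp add: mahler_solution_coeff.simps[of p _ m])
  qed
  then show "A ** ?F = mahler_mat p ?F ** const_mat (mat_at0 A)"
    by (rule fps_mat_eqI)
qed

lemma mahler_normal_form_iff:
  fixes A F :: "complex fps^'n^'n"
  assumes "p \<ge> 2" and "invertible (mat_at0 A)"
  shows "invertible F \<and> mat_at0 F = mat 1 \<and>
      matrix_inv (mahler_mat p F) ** A ** F = const_mat (mat_at0 A) \<longleftrightarrow>
    F = mahler_solution p A"
proof -
  have invertible: "invertible F \<and> invertible (mahler_mat p F)" if "mat_at0 F = mat 1"
    using that assms(1)
    by (simp add: invertible_if_invertible_mat_at0 mat_at0_mahler_mat invertible_mat_1)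
  have "matrix_inv (mahler_mat p F) ** A ** F = const_mat (mat_at0 A) \<longleftrightarrow>
      A ** F = mahler_mat p F ** const_mat (mat_at0 A)" if "mat_at0 F = mat 1"
    using matrix_inv_mult_eq_iff[of "mahler_mat p F" "A ** F"] invertible[OF that]
    by (simp add: matrix_mul_assoc)
  then show ?thesis
    using invertible mahler_solution_unique[OF assms, of F] mahler_solution_solves[OF assms]
    by blast
qed

section \<open>Convergence\<close>

definition mat_norm1 :: "'a::real_normed_vector^'n^'m \<Rightarrow> real" where
  "mat_norm1 X = (\<Sum>i\<in>UNIV. \<Sum>j\<in>UNIV. norm (X $ i $ j))"

lemma mat_norm1_nonneg: "mat_norm1 X \<ge> 0"
  unfolding mat_norm1_def by (intro sum_nonneg) auto

lemma norm_le_mat_norm1: "norm (X $ i $ j) \<le> mat_norm1 X"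
proof -
  have "norm (X $ i $ j) \<le> (\<Sum>j\<in>UNIV. norm (X $ i $ j))"
    by (rule member_le_sum) auto
  also have "\<dots> \<le> mat_norm1 X"
    unfolding mat_norm1_def by (rule member_le_sum) (auto intro: sum_nonneg)
  finally show ?thesis .
qed

lemma mat_norm1_0 [simp]: "mat_norm1 0 = 0"
  by (simp add: mat_norm1_def)

lemma mat_norm1_add: "mat_norm1 (X + Y) \<le> mat_norm1 X + mat_norm1 Y"
  unfolding mat_norm1_def sum.distrib[symmetric] by (intro sum_mono) (simp add: norm_triangle_ineq)

lemma mat_norm1_diff: "mat_norm1 (X - Y) \<le> mat_norm1 X + mat_norm1 Y"
  unfolding mat_norm1_def sum.distrib[symmetric] by (intro sum_mono) (simp add: norm_triangle_ineq4)

lemma mat_norm1_sum: "mat_norm1 (\<Sum>k\<in>S. f k) \<le> (\<Sum>k\<in>S. mat_norm1 (f k))"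
proof (induction S rule: infinite_finite_induct)
  case (insert x S)
  then show ?case
    using mat_norm1_add[of "f x" "sum f S"] by simp
qed simp_all

lemma mat_norm1_mult:
  fixes X :: "'a::real_normed_algebra_1^'k^'m" and Y :: "'a^'n^'k"
  shows "mat_norm1 (X ** Y) \<le> mat_norm1 X * mat_norm1 Y"
proof -
  have "mat_norm1 (X ** Y) \<le> (\<Sum>i\<in>UNIV. \<Sum>j\<in>UNIV. \<Sum>k\<in>UNIV. norm (X $ i $ k) * norm (Y $ k $ j))"
    unfolding mat_norm1_def matrix_matrix_mult_def vec_lambda_beta
    by (intro sum_mono order.trans[OF norm_sum sum_mono] norm_mult_ineq)
  also have "\<dots> = (\<Sum>i\<in>UNIV. \<Sum>k\<in>UNIV. norm (X $ i $ k) * (\<Sum>j\<in>UNIV. norm (Y $ k $ j)))"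
    by (rule sum.cong[OF refl], subst sum.swap) (simp add: sum_distrib_left)
  also have "\<dots> \<le> (\<Sum>i\<in>UNIV. \<Sum>k\<in>UNIV. norm (X $ i $ k) * mat_norm1 Y)"
    unfolding mat_norm1_def
    by (intro sum_mono mult_left_mono member_le_sum[of _ UNIV "\<lambda>k. \<Sum>j\<in>UNIV. norm (Y $ k $ j)"])
      (auto intro: sum_nonneg)
  also have "\<dots> = mat_norm1 X * mat_norm1 Y"
    by (simp add: mat_norm1_def sum_distrib_right)
  finally show ?thesis .
qed

lemma recursive_bound_exponential:
  fixes b :: "nat \<Rightarrow> real"
  assumes "r \<ge> 1" and "D \<ge> 0" and "b 0 \<ge> 0"
    and rec: "\<And>m. m > 0 \<Longrightarrow> b m \<le> D * (\<Sum>k<m. r ^ (m - k) * b k)"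
  shows "b m \<le> b 0 * (r * (1 + D)) ^ m"
proof (induction m rule: less_induct)
  case (less m)
  show ?case
  proof (cases "m = 0")
    case False
    have geometric: "D * (\<Sum>k<m. (1 + D) ^ k) = (1 + D) ^ m - 1"
      by (induction m) (simp_all add: algebra_simps)
    have summand: "r ^ (m - k) * (b 0 * (r * (1 + D)) ^ k) = b 0 * r ^ m * (1 + D) ^ k" if "k < m" for k
    proof -
      have "r ^ (m - k) * r ^ k = r ^ m"
        using that by (simp add: power_add[symmetric])
      then show ?thesis
        by (simp add: power_mult_distrib mult_ac)
    qed
    have "b m \<le> D * (\<Sum>k<m. r ^ (m - k) * b k)"
      using rec False by simp
    also have "\<dots> \<le> D * (\<Sum>k<m. r ^ (m - k) * (b 0 * (r * (1 + D)) ^ k))"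
      using less assms(1,2) by (intro mult_left_mono sum_mono) auto
    also have "\<dots> = D * (\<Sum>k<m. b 0 * r ^ m * (1 + D) ^ k)"
      by (intro arg_cong[where f="\<lambda>x. D * x"] sum.cong) (simp_all add: summand)
    also have "\<dots> = b 0 * r ^ m * (D * (\<Sum>k<m. (1 + D) ^ k))"
      by (simp add: sum_distrib_left mult_ac)
    also have "\<dots> \<le> b 0 * r ^ m * (1 + D) ^ m"
      unfolding geometric using assms by (intro mult_left_mono) simp_all
    finally show ?thesis
      by (simp add: power_mult_distrib mult_ac)
  qed simp
qed

lemma mahler_solution_coeff_step_bound:
  fixes a :: "nat \<Rightarrow> 'a::real_normed_algebra_1^'n^'n"
  assumes r: "r \<ge> 1" and a: "\<And>k. mat_norm1 (a k) \<le> M * r ^ k" and "m > 0"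
  shows "mat_norm1 (mahler_solution_coeff p a m) \<le> mat_norm1 (matrix_inv (a 0)) * (mat_norm1 (a 0) + M) *
    (\<Sum>k<m. r ^ (m - k) * mat_norm1 (mahler_solution_coeff p a k))"
proof -
  define b where "b k = mat_norm1 (mahler_solution_coeff p a k)" for k
  define S where "S = (\<Sum>k<m. r ^ (m - k) * b k)"
  have b: "b k \<ge> 0" for k
    by (simp add: b_def mat_norm1_nonneg)
  have S: "S \<ge> 0"
    unfolding S_def using b r by (intro sum_nonneg) auto
  have dvd_part: "mat_norm1 (if p dvd m \<and> m div p < m then mahler_solution_coeff p a (m div p) ** a 0
      else 0) \<le> mat_norm1 (a 0) * S"
  proof (cases "p dvd m \<and> m div p < m")
    case True
    have "b (m div p) \<le> r ^ (m - m div p) * b (m div p)"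
      using mult_right_mono[OF one_le_power[OF r] b] by simp
    also have "\<dots> \<le> S"
      unfolding S_def using True b r by (intro member_le_sum) auto
    finally show ?thesis
      using True mat_norm1_mult[of "mahler_solution_coeff p a (m div p)" "a 0"]
        mult_left_mono[of "b (m div p)" S "mat_norm1 (a 0)"] mat_norm1_nonneg[of "a 0"]
      by (simp add: b_def mult.commute)
  next
    case False
    then show ?thesis
      using S mat_norm1_nonneg[of "a 0"] by (simp only: if_not_P mat_norm1_0) simp
  qed
  have sum_part: "mat_norm1 (\<Sum>k<m. a (m - k) ** mahler_solution_coeff p a k) \<le> M * S"
  proof -
    have "mat_norm1 (\<Sum>k<m. a (m - k) ** mahler_solution_coeff p a k)
        \<le> (\<Sum>k<m. mat_norm1 (a (m - k)) * b k)"
      unfolding b_def by (intro order.trans[OF mat_norm1_sum] sum_mono mat_norm1_mult)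
    also have "\<dots> \<le> (\<Sum>k<m. M * r ^ (m - k) * b k)"
      using a b by (intro sum_mono mult_right_mono) auto
    finally show ?thesis
      by (simp add: S_def sum_distrib_left mult.assoc)
  qed
  have "b m = mat_norm1 (matrix_inv (a 0) **
      ((if p dvd m \<and> m div p < m then mahler_solution_coeff p a (m div p) ** a 0 else 0)
       - (\<Sum>k<m. a (m - k) ** mahler_solution_coeff p a k)))"
    using \<open>m > 0\<close> unfolding b_def by (subst mahler_solution_coeff.simps) simp
  also have "\<dots> \<le> mat_norm1 (matrix_inv (a 0)) * (mat_norm1 (a 0) * S + M * S)"
    by (intro order.trans[OF mat_norm1_mult] mult_left_mono order.trans[OF mat_norm1_diff]
        add_mono dvd_part sum_part mat_norm1_nonneg)
  finally show ?thesis
    by (simp add: b_def S_def algebra_simps)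
qed

lemma mahler_solution_coeff_bound:
  fixes a :: "nat \<Rightarrow> 'a::real_normed_algebra_1^'n^'n"
  assumes r: "r \<ge> 1" and a: "\<And>k. mat_norm1 (a k) \<le> M * r ^ k"
  obtains K where "K \<ge> 1"
    and "\<And>m. mat_norm1 (mahler_solution_coeff p a m) \<le> mat_norm1 (mat 1 :: 'a^'n^'n) * K ^ m"
proof -
  define D where "D = mat_norm1 (matrix_inv (a 0)) * (mat_norm1 (a 0) + M)"
  have "M \<ge> 0"
    using a[of 0] mat_norm1_nonneg[of "a 0"] by simp
  then have D: "D \<ge> 0"
    unfolding D_def by (simp add: mat_norm1_nonneg)
  then have "mat_norm1 (mahler_solution_coeff p a m) \<le>
      mat_norm1 (mahler_solution_coeff p a 0) * (r * (1 + D)) ^ m" for m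
    using mahler_solution_coeff_step_bound[OF r a] unfolding D_def[symmetric]
    by (intro recursive_bound_exponential[OF r D mat_norm1_nonneg])
  moreover have "r * (1 + D) \<ge> 1"
    using r D mult_mono[of 1 r 1 "1 + D"] by simp
  ultimately show ?thesis
    using that by (simp add: mahler_solution_coeff.simps)
qed

lemma eventually_at_right_0_within_conv_radius:
  fixes X :: "complex fps^'n^'m"
  assumes "\<forall>i j. convergent_fps (X $ i $ j)"
  shows "\<forall>\<^sub>F \<rho> in at_right 0. 0 < \<rho> \<and> \<rho> < 1 \<and> (\<forall>i j. ereal \<rho> < fps_conv_radius (X $ i $ j))"
proof -
  have "((\<lambda>\<rho>. ereal \<rho>) \<longlongrightarrow> 0) (at_right 0)"
    using tendsto_ereal[OF tendsto_ident_at[of "0::real" "{0<..}"]] by (simp add: zero_ereal_def)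
  then have "\<forall>\<^sub>F \<rho> in at_right 0. ereal \<rho> < fps_conv_radius (X $ i $ j)" for i j
    using assms by (intro order_tendstoD(2)) (auto simp: convergent_fps_def)
  moreover have "\<forall>\<^sub>F \<rho> in at_right (0::real). \<rho> < 1"
    unfolding eventually_at_right_field by (intro exI[of _ 1]) auto
  ultimately show ?thesis
    using eventually_at_right_less[of 0] by (intro eventually_conj eventually_all_finite)
qed

lemma convergent_fps_mat_coeff_bound:
  fixes X :: "complex fps^'n^'m"
  assumes "\<forall>i j. convergent_fps (X $ i $ j)"
  obtains M r where "r \<ge> 1" and "\<And>k. mat_norm1 (coeff_mat X k) \<le> M * r ^ k"
proof -
  obtain \<rho> where \<rho>: "0 < \<rho>" "\<rho> < 1" "\<And>i j. ereal \<rho> < fps_conv_radius (X $ i $ j)"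
    using eventually_happens'[OF _ eventually_at_right_0_within_conv_radius[OF assms]] by auto
  have "(\<lambda>k. norm (fps_nth (X $ i $ j) k * of_real \<rho> ^ k)) \<longlonglongrightarrow> 0" for i j
    using \<rho>(1,3) by (intro summable_LIMSEQ_zero norm_summable_fps) simp
  then have "(\<lambda>k. mat_norm1 (coeff_mat X k) * \<rho> ^ k) \<longlonglongrightarrow> 0"
    using \<rho>(1) unfolding mat_norm1_def coeff_mat_def sum_distrib_right
    by (intro tendsto_null_sum) (simp add: norm_mult norm_power)
  then have "Bseq (\<lambda>k. mat_norm1 (coeff_mat X k) * \<rho> ^ k)"
    by (rule convergent_imp_Bseq[OF convergentI])
  then obtain M where M: "\<And>k. norm (mat_norm1 (coeff_mat X k) * \<rho> ^ k) \<le> M"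
    by (elim BseqE) blast
  show ?thesis
  proof
    show "1 \<le> 1 / \<rho>"
      using \<rho> by simp
    show "mat_norm1 (coeff_mat X k) \<le> M * (1 / \<rho>) ^ k" for k
      using M[of k] \<rho>(1) mat_norm1_nonneg[of "coeff_mat X k"]
      by (simp add: power_one_over field_simps)
  qed
qed

lemma convergent_fps_if_coeff_bound:
  fixes f :: "complex fps"
  assumes "K > 0" and bound: "\<And>k. norm (fps_nth f k) \<le> B * K ^ k"
  shows "convergent_fps f"
proof -
  define z where "z = complex_of_real (1 / (2 * K))"
  have nz: "norm z = 1 / (2 * K)"
    unfolding z_def norm_of_real using assms(1) by simp
  have "summable (\<lambda>n. fps_nth f n * z ^ n)"
  proof (rule summable_comparison_test)
    have "norm (fps_nth f n * z ^ n) \<le> B * (1 / 2) ^ n" for n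
    proof -
      have "norm (fps_nth f n * z ^ n) = norm (fps_nth f n) * (1 / (2 * K)) ^ n"
        by (simp add: nz norm_mult norm_power)
      also have "\<dots> \<le> B * K ^ n * (1 / (2 * K)) ^ n"
        using assms by (intro mult_right_mono bound) simp
      also have "\<dots> = B * (1 / 2) ^ n"
        using assms(1) by (simp add: power_divide power_mult_distrib)
      finally show ?thesis .
    qed
    then show "\<exists>N. \<forall>n\<ge>N. norm (fps_nth f n * z ^ n) \<le> B * (1 / 2) ^ n"
      by blast
    show "summable (\<lambda>n. B * (1 / 2) ^ n :: real)"
      by simp
  qed
  then have "ereal (norm z) \<le> fps_conv_radius f"
    unfolding fps_conv_radius_def by (rule conv_radius_geI)
  moreover have "norm z > 0"
    using assms(1) by (simp add: nz)
  ultimately show ?thesis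
    unfolding convergent_fps_def using ereal_less(2) order.strict_trans2 by blast
qed

lemma convergent_mahler_solution:
  fixes A :: "complex fps^'n^'n"
  assumes "\<forall>i j. convergent_fps (A $ i $ j)"
  shows "convergent_fps (mahler_solution p A $ i $ j)"
proof -
  obtain M r where r: "r \<ge> 1" and "\<And>k. mat_norm1 (coeff_mat A k) \<le> M * r ^ k"
    using convergent_fps_mat_coeff_bound[OF assms] by blast
  from mahler_solution_coeff_bound[OF this, of p] obtain K where "K \<ge> 1"
    and bound: "\<And>m. mat_norm1 (coeff_mat (mahler_solution p A) m) \<le> mat_norm1 (mat 1 :: complex^'n^'n) * K ^ m"
    by (auto simp: mahler_solution_def)
  show ?thesis
  proof (rule convergent_fps_if_coeff_bound)
    show "K > 0"
      using \<open>K \<ge> 1\<close> by simp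
    show "norm (fps_nth (mahler_solution p A $ i $ j) k) \<le> mat_norm1 (mat 1 :: complex^'n^'n) * K ^ k" for k
      using norm_le_mat_norm1[of "coeff_mat (mahler_solution p A) k" i j] bound[of k]
      by (simp add: coeff_mat_def)
  qed
qed

definition eval_fps_mat :: "complex fps^'n^'m \<Rightarrow> complex \<Rightarrow> complex^'n^'m" where
  "eval_fps_mat X z = (\<chi> i j. eval_fps (X $ i $ j) z)"

definition has_mat_fps_expansion :: "(complex \<Rightarrow> complex^'n^'m) \<Rightarrow> complex fps^'n^'m \<Rightarrow> bool"
    (infixl \<open>has'_mat'_fps'_expansion\<close> 60) where
  "f has_mat_fps_expansion X \<longleftrightarrow> (\<forall>i j. (\<lambda>z. f z $ i $ j) has_fps_expansion X $ i $ j)"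

lemma has_mat_fps_expansion_eval:
  "(\<forall>i j. convergent_fps (X $ i $ j)) \<Longrightarrow> eval_fps_mat X has_mat_fps_expansion X"
  by (simp add: has_mat_fps_expansion_def eval_fps_mat_def convergent_fps_def
      eval_fps_has_fps_expansion)

lemma has_mat_fps_expansion_imp_convergent:
  "f has_mat_fps_expansion X \<Longrightarrow> convergent_fps (X $ i $ j)"
  by (simp add: has_mat_fps_expansion_def has_fps_expansion_def convergent_fps_def)

lemma has_mat_fps_expansion_const: "(\<lambda>_. C) has_mat_fps_expansion const_mat C"
  by (simp add: has_mat_fps_expansion_def const_mat_def has_fps_expansion_const)

lemma has_mat_fps_expansion_poly:
  "eval_poly_mat P has_mat_fps_expansion (\<chi> i j. fps_of_poly (P $ i $ j))"
  by (simp add: has_mat_fps_expansion_def has_fps_expansion_def eval_poly_mat_def)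

lemma has_mat_fps_expansion_mat:
  "h has_fps_expansion H \<Longrightarrow> (\<lambda>z. mat (h z)) has_mat_fps_expansion mat H"
  by (simp add: has_mat_fps_expansion_def mat_def)

lemma has_mat_fps_expansion_mult:
  assumes "f has_mat_fps_expansion X" and "g has_mat_fps_expansion Y"
  shows "(\<lambda>z. f z ** g z) has_mat_fps_expansion X ** Y"
  using assms unfolding has_mat_fps_expansion_def matrix_matrix_mult_def
  by (auto intro!: fps_expansion_intros)

lemma has_mat_fps_expansion_mahler:
  assumes "f has_mat_fps_expansion X" and "p > 0"
  shows "(\<lambda>z. f (z ^ p)) has_mat_fps_expansion mahler_mat p X"
  unfolding has_mat_fps_expansion_def mahler_mat_def mahler_fps_def
proof (intro allI)
  fix i j
  have "((\<lambda>z. f z $ i $ j) \<circ> (\<lambda>z. z ^ p)) has_fps_expansion (X $ i $ j oo fps_X ^ p)"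
    using assms by (intro has_fps_expansion_compose has_fps_expansion_fps_X_power)
      (simp_all add: has_mat_fps_expansion_def)
  then show "(\<lambda>z. f (z ^ p) $ i $ j) has_fps_expansion (\<chi> i j. X $ i $ j oo fps_X ^ p) $ i $ j"
    by (simp add: o_def)
qed

lemma has_fps_expansion_det:
  assumes "f has_mat_fps_expansion X"
  shows "(\<lambda>z. det (f z)) has_fps_expansion det X"
proof -
  have "(\<lambda>_. of_int (sign q) :: complex) has_fps_expansion of_int (sign q)" for q :: "'n \<Rightarrow> 'n"
    using has_fps_expansion_const[of "of_int (sign q) :: complex"] by (simp add: fps_of_int)
  then show ?thesis
    using assms unfolding det_def has_mat_fps_expansion_def
    by (intro fps_expansion_intros) auto
qed

lemma has_mat_fps_expansion_adjugate:
  assumes "f has_mat_fps_expansion X"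
  shows "(\<lambda>z. adjugate (f z)) has_mat_fps_expansion adjugate X"
  unfolding has_mat_fps_expansion_def adjugate_def vec_lambda_beta
proof (intro allI has_fps_expansion_det)
  fix j i
  show "(\<lambda>z. \<chi> r. if r = i then axis j 1 else f z $ r) has_mat_fps_expansion
      (\<chi> r. if r = i then axis j 1 else X $ r)"
    using assms by (auto simp: has_mat_fps_expansion_def axis_def)
qed

lemma has_mat_fps_expansion_unique:
  assumes "f has_mat_fps_expansion X" and "g has_mat_fps_expansion X"
  shows "\<forall>\<^sub>F z in nhds 0. f z = g z"
proof -
  have "\<forall>\<^sub>F z in nhds 0. f z $ i $ j = g z $ i $ j" for i j
  proof -
    have "\<forall>\<^sub>F z in nhds 0. eval_fps (X $ i $ j) z = f z $ i $ j"
      and "\<forall>\<^sub>F z in nhds 0. eval_fps (X $ i $ j) z = g z $ i $ j"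
      using assms by (simp_all add: has_mat_fps_expansion_def has_fps_expansion_def)
    then show ?thesis
      by eventually_elim simp
  qed
  then show ?thesis
    by (simp add: vec_eq_iff eventually_all_finite)
qed

lemma convergent_fps_mat_inverse:
  fixes X :: "complex fps^'n^'n"
  assumes "\<forall>i j. convergent_fps (X $ i $ j)" and "invertible (mat_at0 X)"
  obtains G :: "complex fps^'n^'n"
  where "\<forall>i j. convergent_fps (G $ i $ j)" and "X ** G = mat 1" and "G ** X = mat 1"
proof
  let ?G = "mat (inverse (det X)) ** adjugate X"
  have "fps_nth (det X) 0 \<noteq> 0"
    using assms(2) by (simp add: det_mat_at0[symmetric] invertible_det_nz)
  then have "(\<lambda>z. mat (inverse (det (eval_fps_mat X z))) ** adjugate (eval_fps_mat X z))
      has_mat_fps_expansion ?G"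
    using has_mat_fps_expansion_eval[OF assms(1)]
    by (intro has_mat_fps_expansion_mult has_mat_fps_expansion_mat has_fps_expansion_inverse
        has_fps_expansion_det has_mat_fps_expansion_adjugate)
  then show "\<forall>i j. convergent_fps (?G $ i $ j)"
    by (blast intro: has_mat_fps_expansion_imp_convergent)
  show "X ** ?G = mat 1" and "?G ** X = mat 1"
    by (rule fps_mat_inverse[OF assms(2)])+
qed

lemma eventually_det_eval_fps_mat_nonzero:
  fixes F :: "complex fps^'n^'n"
  assumes "\<forall>i j. convergent_fps (F $ i $ j)" and "invertible (mat_at0 F)"
  shows "\<forall>\<^sub>F z in nhds 0. det (eval_fps_mat F z) \<noteq> 0"
proof -
  have "((\<lambda>z. det (eval_fps_mat F z)) \<longlongrightarrow> fps_nth (det F) 0) (nhds 0)"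
    by (intro has_fps_expansion_imp_tendsto_0 has_fps_expansion_det has_mat_fps_expansion_eval assms(1))
  moreover have "fps_nth (det F) 0 \<noteq> 0"
    using assms(2) by (simp add: det_mat_at0[symmetric] invertible_det_nz)
  ultimately show ?thesis
    by (rule tendsto_imp_eventually_ne)
qed

section \<open>Meromorphic continuation for rational systems\<close>

lemma rational_fps_common_denominator:
  assumes "finite I" and "\<forall>i\<in>I. rational_fps (f i)"
  shows "\<exists>D. D \<noteq> 0 \<and> (\<forall>i\<in>I. \<exists>P. fps_of_poly D * f i = fps_of_poly P)"
  using assms
proof (induction I rule: finite_induct)
  case empty
  show ?case
    by (intro exI[of _ 1]) simp
next
  case (insert x I)
  obtain D where D: "D \<noteq> 0" and P: "\<forall>i\<in>I. \<exists>P. fps_of_poly D * f i = fps_of_poly P"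
    using insert by auto
  obtain P Q where Q: "Q \<noteq> 0" and PQ: "f x * fps_of_poly Q = fps_of_poly P"
    using insert.prems unfolding rational_fps_def by auto
  have "\<exists>P'. fps_of_poly (D * Q) * f i = fps_of_poly P'" if i: "i \<in> insert x I" for i
  proof (cases "i = x")
    case True
    then show ?thesis
      using PQ by (intro exI[of _ "D * P"]) (simp add: fps_of_poly_mult mult_ac)
  next
    case False
    then obtain P' where "fps_of_poly D * f i = fps_of_poly P'"
      using P i by auto
    then show ?thesis
      by (intro exI[of _ "P' * Q"]) (simp add: fps_of_poly_mult mult_ac)
  qed
  then show ?case
    using D Q by (intro exI[of _ "D * Q"]) auto
qed

lemma rational_fps_mat_common_denominator:
  fixes A :: "complex fps^'n^'m"
  assumes "\<forall>i j. rational_fps (A $ i $ j)"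
  obtains D and R :: "complex poly^'n^'m"
  where "D \<noteq> 0" and "(\<chi> i j. fps_of_poly (R $ i $ j)) = mat (fps_of_poly D) ** A"
proof -
  obtain D where D: "D \<noteq> 0"
    and ex: "\<forall>ij\<in>UNIV. \<exists>P. fps_of_poly D * A $ fst ij $ snd ij = fps_of_poly P"
    using rational_fps_common_denominator[of UNIV "\<lambda>ij. A $ fst ij $ snd ij"] assms by auto
  obtain R where R: "\<forall>ij\<in>UNIV. fps_of_poly D * A $ fst ij $ snd ij = fps_of_poly (R ij)"
    using bchoice[OF ex] by blast
  have "(\<chi> i j. fps_of_poly ((\<chi> i j. R (i, j)) $ i $ j)) = mat (fps_of_poly D) ** A"
    using R by (simp add: mat_matrix_mul)
  with D that show ?thesis
    by blast
qed

(* Agreement is required near boundary points of U k too: near any point of U N, only the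
   finitely many gluing steps k < N then matter. *)
lemma glue_increasing_chain:
  fixes U :: "nat \<Rightarrow> 'a::topological_space set" and g :: "nat \<Rightarrow> 'a \<Rightarrow> 'b"
  assumes "incseq U" and "\<And>N. open (U N)"
    and agree: "\<And>k z0. \<forall>\<^sub>F z in at z0. z \<in> U k \<longrightarrow> g (Suc k) z = g k z"
  obtains G where "\<And>N z0. z0 \<in> U N \<Longrightarrow> \<forall>\<^sub>F z in at z0. G z = g N z"
proof
  define G where "G z = g (LEAST N. z \<in> U N) z" for z
  fix N z0
  assume "z0 \<in> U N"
  then have "\<forall>\<^sub>F z in at z0. z \<in> U N \<and> (\<forall>k\<in>{..<N}. z \<in> U k \<longrightarrow> g (Suc k) z = g k z)"
    using assms(2) agree by (intro eventually_conj eventually_at_in_open' eventually_ball_finite) auto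
  then show "\<forall>\<^sub>F z in at z0. G z = g N z"
  proof (rule eventually_mono)
    fix z
    assume z: "z \<in> U N \<and> (\<forall>k\<in>{..<N}. z \<in> U k \<longrightarrow> g (Suc k) z = g k z)"
    define n where "n = (LEAST N. z \<in> U N)"
    have "n \<le> N" and "z \<in> U n"
      using z unfolding n_def by (auto intro: Least_le LeastI)
    have "g k z = g n z" if "n \<le> k" and "k \<le> N" for k
      using that
    proof (induction k rule: dec_induct)
      case (step k)
      have "z \<in> U k"
        using \<open>z \<in> U n\<close> \<open>incseq U\<close> step.hyps(1) by (auto simp: incseq_def)
      then show ?case
        using z step by simp
    qed simp
    from this[OF \<open>n \<le> N\<close> order.refl] show "G z = g N z"
      by (simp add: G_def n_def)
  qed
qed

definition mahler_disc :: "nat \<Rightarrow> real \<Rightarrow> nat \<Rightarrow> complex set" where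
  "mahler_disc p \<rho> N = {z. norm z ^ (p ^ N) < \<rho>}"

lemma open_mahler_disc: "open (mahler_disc p \<rho> N)"
  unfolding mahler_disc_def by (intro open_Collect_less continuous_intros)

lemma mahler_disc_0: "mahler_disc p \<rho> 0 = ball 0 \<rho>"
  by (auto simp: mahler_disc_def)

lemma power_in_mahler_disc_iff: "z ^ p \<in> mahler_disc p \<rho> N \<longleftrightarrow> z \<in> mahler_disc p \<rho> (Suc N)"
  by (simp add: mahler_disc_def norm_power power_mult[symmetric] mult.commute)

lemma mahler_disc_subset_ball:
  assumes "\<rho> < 1"
  shows "mahler_disc p \<rho> N \<subseteq> ball 0 1"
proof
  fix z
  assume z: "z \<in> mahler_disc p \<rho> N"
  show "z \<in> ball 0 1"
  proof (rule ccontr)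
    assume "z \<notin> ball 0 1"
    then have "1 \<le> norm z ^ (p ^ N)"
      by (simp add: one_le_power)
    then show False
      using z assms by (simp add: mahler_disc_def)
  qed
qed

lemma incseq_mahler_disc:
  assumes "p > 0" and "\<rho> < 1"
  shows "incseq (mahler_disc p \<rho>)"
proof (intro monoI subsetI)
  fix k N z
  assume "k \<le> N" and z: "z \<in> mahler_disc p \<rho> k"
  have "p ^ k \<le> p ^ N"
    using assms(1) \<open>k \<le> N\<close> by (simp add: power_increasing)
  moreover have "z \<in> ball 0 1"
    using mahler_disc_subset_ball[OF assms(2)] z by blast
  ultimately have "norm z ^ (p ^ N) \<le> norm z ^ (p ^ k)"
    using power_decreasing[of "p ^ k" "p ^ N" "norm z"] by simp
  then show "z \<in> mahler_disc p \<rho> N"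
    using z by (simp add: mahler_disc_def)
qed

lemma ball_subset_Union_mahler_disc:
  assumes "p \<ge> 2" and "\<rho> > 0"
  shows "ball 0 1 \<subseteq> (\<Union>N. mahler_disc p \<rho> N)"
proof
  fix z :: complex
  assume "z \<in> ball 0 1"
  then have z: "norm z < 1"
    by simp
  obtain N where N: "norm z ^ N < \<rho>"
    using real_arch_pow_inv[OF assms(2) z] by blast
  have "N \<le> p ^ N"
    using assms(1) less_exp[of N] power_mono[of 2 p N] by linarith
  then have "norm z ^ (p ^ N) \<le> norm z ^ N"
    using z by (intro power_decreasing) auto
  then have "z \<in> mahler_disc p \<rho> N"
    using N by (simp add: mahler_disc_def)
  then show "z \<in> (\<Union>N. mahler_disc p \<rho> N)"
    by blast
qed

lemma mahler_iterates_meromorphic: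
  fixes g :: "nat \<Rightarrow> complex \<Rightarrow> complex^'n^'n" and B :: "complex \<Rightarrow> complex^'n^'n"
  assumes g_Suc: "\<And>N z. g (Suc N) z = B z ** g N (z ^ p) ** C"
    and g_0: "\<And>i j. (\<lambda>z. g 0 z $ i $ j) analytic_on ball 0 \<rho>"
    and B: "\<And>i j. (\<lambda>z. B z $ i $ j) meromorphic_on UNIV"
  shows "(\<lambda>z. g N z $ i $ j) meromorphic_on mahler_disc p \<rho> N"
proof (induction N arbitrary: i j)
  case 0
  show ?case
    using g_0 by (simp add: mahler_disc_0 analytic_on_imp_meromorphic_on)
next
  case (Suc N)
  have "(\<lambda>z. g N (z ^ p) $ k $ l) meromorphic_on mahler_disc p \<rho> (Suc N)" for k l
    by (rule meromorphic_on_compose[OF Suc.IH])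
      (auto intro!: analytic_intros simp: power_in_mahler_disc_iff)
  moreover have "(\<lambda>z. B z $ i $ k) meromorphic_on mahler_disc p \<rho> (Suc N)" for i k
    using B by (rule meromorphic_on_subset) simp
  ultimately show ?case
    unfolding g_Suc matrix_matrix_mult_def vec_lambda_beta by (intro meromorphic_intros)
qed

lemma mahler_iterates_agree:
  fixes g :: "nat \<Rightarrow> complex \<Rightarrow> complex^'n^'n" and B :: "complex \<Rightarrow> complex^'n^'n"
  assumes g_Suc: "\<And>N z. g (Suc N) z = B z ** g N (z ^ p) ** C"
    and eq: "\<And>z. z \<in> ball 0 \<rho> \<Longrightarrow> z \<notin> E \<Longrightarrow> g 0 z = B z ** g 0 (z ^ p) ** C"
    and "finite E" and "p > 0"
  shows "\<forall>\<^sub>F z in at z0. z \<in> mahler_disc p \<rho> k \<longrightarrow> g (Suc k) z = g k z"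
proof -
  let ?X = "\<lambda>k. \<Union>j\<le>k. \<Union>e\<in>E. {z. z ^ (p ^ j) = e}"
  have "g (Suc k) z = g k z" if "z \<in> mahler_disc p \<rho> k" and "z \<notin> ?X k" for z
    using that
  proof (induction k arbitrary: z)
    case 0
    then show ?case
      by (auto simp: g_Suc mahler_disc_0 eq[symmetric])
  next
    case (Suc k)
    have "(z ^ p) ^ p ^ j \<notin> E" if "j \<le> k" for j
    proof -
      have "z ^ p ^ Suc j \<notin> E"
        using Suc.prems(2) that by blast
      moreover have "(z ^ p) ^ p ^ j = z ^ p ^ Suc j"
        by (simp add: power_mult)
      ultimately show ?thesis
        by simp
    qed
    then have "g (Suc k) (z ^ p) = g k (z ^ p)"
      using Suc.prems(1) by (intro Suc.IH) (auto simp: power_in_mahler_disc_iff)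
    then show ?case
      by (simp add: g_Suc)
  qed
  moreover have "finite (?X k)"
    using \<open>finite E\<close> \<open>p > 0\<close> by (intro finite_UN_I finite_nth_roots) auto
  then have "\<forall>\<^sub>F z in at z0. z \<notin> ?X k"
    using islimpt_finite islimpt_iff_eventually by blast
  ultimately show ?thesis
    by (auto elim: eventually_mono)
qed

lemma mahler_meromorphic_continuation:
  fixes Fv B :: "complex \<Rightarrow> complex^'n^'n" and C :: "complex^'n^'n"
  assumes p: "p \<ge> 2" and \<rho>: "0 < \<rho>" "\<rho> < 1" and "finite E"
    and Fv: "\<And>i j. (\<lambda>z. Fv z $ i $ j) analytic_on ball 0 \<rho>"
    and B: "\<And>i j. (\<lambda>z. B z $ i $ j) meromorphic_on UNIV"
    and eq: "\<And>z. z \<in> ball 0 \<rho> \<Longrightarrow> z \<notin> E \<Longrightarrow> Fv z = B z ** Fv (z ^ p) ** C"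
  obtains G :: "complex \<Rightarrow> complex^'n^'n"
  where "\<And>i j. (\<lambda>z. G z $ i $ j) meromorphic_on ball 0 1" and "\<forall>\<^sub>F z in at 0. G z = Fv z"
proof -
  define g where "g = rec_nat Fv (\<lambda>_ h z. B z ** h (z ^ p) ** C)"
  have g_0: "g 0 = Fv" and g_Suc: "g (Suc N) z = B z ** g N (z ^ p) ** C" for N z
    by (simp_all add: g_def)
  have "p > 0"
    using p by simp
  have agree: "\<forall>\<^sub>F z in at z0. z \<in> mahler_disc p \<rho> k \<longrightarrow> g (Suc k) z = g k z" for k z0
    using \<open>p > 0\<close> \<open>finite E\<close>
    by (intro mahler_iterates_agree[of g B p C \<rho> E]) (simp_all add: g_0 g_Suc eq)
  obtain G where G: "\<And>N z0. z0 \<in> mahler_disc p \<rho> N \<Longrightarrow> \<forall>\<^sub>F z in at z0. G z = g N z"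
    using glue_increasing_chain[OF incseq_mahler_disc[OF \<open>p > 0\<close> \<rho>(2)] open_mahler_disc agree]
    by blast
  show thesis
  proof
    show "(\<lambda>z. G z $ i $ j) meromorphic_on ball 0 1" for i j
    proof (subst meromorphic_on_meromorphic_at, intro ballI)
      fix z0 :: complex
      assume "z0 \<in> ball 0 1"
      then obtain N where N: "z0 \<in> mahler_disc p \<rho> N"
        using ball_subset_Union_mahler_disc[OF p \<rho>(1)] by blast
      have "(\<lambda>z. g N z $ i $ j) meromorphic_on {z0}"
        using mahler_iterates_meromorphic[of g B p C \<rho>] g_Suc Fv B N
        by (auto simp: g_0 intro: meromorphic_on_subset)
      moreover have "\<forall>\<^sub>F z in at z0. g N z $ i $ j = G z $ i $ j"
        using G[OF N] by (auto elim: eventually_mono)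
      then have "(\<lambda>z. g N z $ i $ j) meromorphic_on {z0} \<longleftrightarrow> (\<lambda>z. G z $ i $ j) meromorphic_on {z0}"
        by (intro meromorphic_on_cong) auto
      ultimately show "(\<lambda>z. G z $ i $ j) meromorphic_on {z0}"
        by blast
    qed
    show "\<forall>\<^sub>F z in at 0. G z = Fv z"
      using G[of 0 0] \<rho>(1) by (simp add: mahler_disc_0 g_0)
  qed
qed

lemma det_common_denominator_nonzero:
  fixes A :: "complex fps^'n^'n" and R :: "complex poly^'n^'n"
  assumes R: "(\<chi> i j. fps_of_poly (R $ i $ j)) = mat (fps_of_poly D) ** A"
    and "D \<noteq> 0" and "invertible (mat_at0 A)"
  shows "det R \<noteq> 0"
proof -
  have "fps_nth (det A) 0 \<noteq> 0"
    using assms(3) by (simp add: det_mat_at0[symmetric] invertible_det_nz)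
  then have "fps_of_poly D ^ CARD('n) * det A \<noteq> 0"
    using assms(2) by auto
  also have "fps_of_poly D ^ CARD('n) * det A = det (\<chi> i j. fps_of_poly (R $ i $ j))"
    by (simp add: R det_mul det_mat)
  also have "\<dots> = fps_of_poly (det R)"
    by (rule det_map[symmetric]) (simp_all add: fps_of_poly_add fps_of_poly_mult)
  finally show ?thesis
    by auto
qed

lemma eval_mahler_equation_cleared:
  fixes A F :: "complex fps^'n^'n" and R :: "complex poly^'n^'n"
  assumes "p > 0" and R: "(\<chi> i j. fps_of_poly (R $ i $ j)) = mat (fps_of_poly D) ** A"
    and F: "\<forall>i j. convergent_fps (F $ i $ j)"
    and eq: "A ** F = mahler_mat p F ** const_mat (mat_at0 A)"
  shows "\<forall>\<^sub>F z in nhds 0. eval_poly_mat R z ** eval_fps_mat F z =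
    mat (poly D z) ** eval_fps_mat F (z ^ p) ** mat_at0 A"
proof (rule has_mat_fps_expansion_unique)
  note F_expansion = has_mat_fps_expansion_eval[OF F]
  show "(\<lambda>z. eval_poly_mat R z ** eval_fps_mat F z) has_mat_fps_expansion mat (fps_of_poly D) ** A ** F"
    using has_mat_fps_expansion_mult[OF has_mat_fps_expansion_poly[of R] F_expansion] unfolding R .
  have "(\<lambda>z. mat (poly D z) ** eval_fps_mat F (z ^ p) ** mat_at0 A) has_mat_fps_expansion
      mat (fps_of_poly D) ** mahler_mat p F ** const_mat (mat_at0 A)"
    using assms(1) F_expansion
    by (intro has_mat_fps_expansion_mult has_mat_fps_expansion_mat has_mat_fps_expansion_mahler
        has_mat_fps_expansion_const) (auto simp: has_fps_expansion_def)
  moreover have "mat (fps_of_poly D) ** mahler_mat p F ** const_mat (mat_at0 A) =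
      mat (fps_of_poly D) ** A ** F"
    by (simp only: matrix_mul_assoc[symmetric] eq)
  ultimately show "(\<lambda>z. mat (poly D z) ** eval_fps_mat F (z ^ p) ** mat_at0 A) has_mat_fps_expansion
      mat (fps_of_poly D) ** A ** F"
    by simp
qed

lemma eval_mahler_equation_solved:
  fixes A F :: "complex fps^'n^'n" and R :: "complex poly^'n^'n"
  assumes "p > 0" and "(\<chi> i j. fps_of_poly (R $ i $ j)) = mat (fps_of_poly D) ** A"
    and "\<forall>i j. convergent_fps (F $ i $ j)"
    and "A ** F = mahler_mat p F ** const_mat (mat_at0 A)"
  shows "\<forall>\<^sub>F z in nhds 0. poly (det R) z \<noteq> 0 \<longrightarrow> eval_fps_mat F z =
    mat (inverse (poly (det R) z)) ** eval_poly_mat (adjugate R) z ** mat (poly D z) **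
      eval_fps_mat F (z ^ p) ** mat_at0 A"
  using eval_mahler_equation_cleared[OF assms]
proof (rule eventually_mono, intro impI)
  fix z
  assume eq: "eval_poly_mat R z ** eval_fps_mat F z = mat (poly D z) ** eval_fps_mat F (z ^ p) ** mat_at0 A"
    and "poly (det R) z \<noteq> 0"
  then have "mat (inverse (poly (det R) z)) ** eval_poly_mat (adjugate R) z ** eval_poly_mat R z = mat 1"
    using adjugate_inverse(2)[of "eval_poly_mat R z"]
    by (simp add: det_eval_poly_mat adjugate_eval_poly_mat)
  then have "eval_fps_mat F z = mat (inverse (poly (det R) z)) ** eval_poly_mat (adjugate R) z **
      (eval_poly_mat R z ** eval_fps_mat F z)"
    by (simp add: matrix_mul_assoc)
  also have "\<dots> = mat (inverse (poly (det R) z)) ** eval_poly_mat (adjugate R) z **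
      (mat (poly D z) ** eval_fps_mat F (z ^ p) ** mat_at0 A)"
    by (simp only: eq)
  finally show "eval_fps_mat F z = mat (inverse (poly (det R) z)) ** eval_poly_mat (adjugate R) z **
      mat (poly D z) ** eval_fps_mat F (z ^ p) ** mat_at0 A"
    by (simp add: matrix_mul_assoc)
qed

lemma small_disc_within_conv_radius:
  fixes F :: "complex fps^'n^'m"
  assumes "\<forall>i j. convergent_fps (F $ i $ j)" and "\<forall>\<^sub>F z in nhds 0. P z"
  obtains \<rho> where "0 < \<rho>" and "\<rho> < 1" and "\<And>i j. ereal \<rho> < fps_conv_radius (F $ i $ j)"
    and "\<And>z. z \<in> ball 0 \<rho> \<Longrightarrow> P z"
proof -
  obtain d where "d > 0" and d: "\<And>z. dist z 0 < d \<Longrightarrow> P z"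
    using assms(2) unfolding eventually_nhds_metric by blast
  then have "\<forall>\<^sub>F \<rho> in at_right 0. \<rho> < d"
    unfolding eventually_at_right_field by (intro exI[of _ d]) auto
  then have "\<exists>\<rho>. (0 < \<rho> \<and> \<rho> < 1 \<and> (\<forall>i j. ereal \<rho> < fps_conv_radius (F $ i $ j))) \<and> \<rho> < d"
    using eventually_happens'[OF _ eventually_conj[OF eventually_at_right_0_within_conv_radius[OF assms(1)]]]
    by simp
  then show ?thesis
    using that d by (auto simp: dist_commute)
qed

lemma mahler_solution_meromorphic:
  fixes A F :: "complex fps^'n^'n"
  assumes p: "p \<ge> 2" and rat: "\<forall>i j. rational_fps (A $ i $ j)" and A0: "invertible (mat_at0 A)"
    and F: "\<forall>i j. convergent_fps (F $ i $ j)" and F0: "mat_at0 F = mat 1"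
    and eq: "A ** F = mahler_mat p F ** const_mat (mat_at0 A)"
  obtains G :: "complex \<Rightarrow> complex^'n^'n"
  where "\<And>i j. (\<lambda>z. G z $ i $ j) meromorphic_on ball 0 1"
    and "\<forall>\<^sub>F z in at 0. G z = eval_fps_mat F z" and "\<not> (\<forall>\<^sub>F z in at 0. det (G z) = 0)"
proof -
  obtain D and R :: "complex poly^'n^'n"
    where D: "D \<noteq> 0" and R: "(\<chi> i j. fps_of_poly (R $ i $ j)) = mat (fps_of_poly D) ** A"
    using rational_fps_mat_common_denominator[OF rat] by blast
  have "det R \<noteq> 0"
    using R D A0 by (rule det_common_denominator_nonzero)
  define Fv where "Fv = eval_fps_mat F"
  define B where "B z = mat (inverse (poly (det R) z)) ** eval_poly_mat (adjugate R) z ** mat (poly D z)"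
    for z
  obtain \<rho> where \<rho>: "0 < \<rho>" "\<rho> < 1" and radius: "\<And>i j. ereal \<rho> < fps_conv_radius (F $ i $ j)"
    and eq_ball: "\<And>z. z \<in> ball 0 \<rho> \<Longrightarrow> poly (det R) z \<noteq> 0 \<Longrightarrow> Fv z = B z ** Fv (z ^ p) ** mat_at0 A"
    using small_disc_within_conv_radius[OF F eval_mahler_equation_solved[OF _ R F eq]] p
    unfolding Fv_def B_def by auto
  have Fv_analytic: "(\<lambda>z. Fv z $ i $ j) analytic_on ball 0 \<rho>" for i j
    unfolding Fv_def eval_fps_mat_def vec_lambda_beta
    by (intro analytic_on_eval_fps) (auto intro: order.strict_trans[OF _ radius[of i j]])
  have "B z $ i $ j = poly (adjugate R $ i $ j) z * poly D z / poly (det R) z" for z i j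
    by (simp add: B_def mat_matrix_mul matrix_mul_mat eval_poly_mat_def field_simps)
  then have B_meromorphic: "(\<lambda>z. B z $ i $ j) meromorphic_on UNIV" for i j
    by (simp only:) (intro meromorphic_intros analytic_on_imp_meromorphic_on;
        auto simp: analytic_on_open intro!: holomorphic_intros)
  obtain G :: "complex \<Rightarrow> complex^'n^'n" where G: "\<And>i j. (\<lambda>z. G z $ i $ j) meromorphic_on ball 0 1"
    and G_Fv: "\<forall>\<^sub>F z in at 0. G z = Fv z"
    using mahler_meromorphic_continuation[OF p \<rho> poly_roots_finite[OF \<open>det R \<noteq> 0\<close>]
        Fv_analytic B_meromorphic eq_ball] by auto
  have "\<forall>\<^sub>F z in nhds 0. det (eval_fps_mat F z) \<noteq> 0"
    using eventually_det_eval_fps_mat_nonzero[OF F] F0 invertible_mat_1 by simp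
  then have "\<forall>\<^sub>F z in at 0. det (G z) \<noteq> 0"
    using G_Fv by (auto simp: eventually_at_filter Fv_def elim: eventually_elim2)
  then have "\<not> (\<forall>\<^sub>F z in at 0. det (G z) = 0)"
    by (auto dest: eventually_conj simp: eventually_False)
  moreover have "\<forall>\<^sub>F z in at 0. G z = eval_fps_mat F z"
    using G_Fv by (simp add: Fv_def)
  ultimately show ?thesis
    by (intro that[OF G])
qed

theorem mainTheorem2:
  fixes p :: nat and A :: "complex fps ^'n^'n"
  assumes "p \<ge> 2"
    and "\<forall>i j. convergent_fps (A $ i $ j)"
    and "invertible A"
    and "invertible (mat_at0 A)"
  shows "(\<exists>!F :: complex fps ^'n^'n. invertible F \<and> mat_at0 F = mat 1 \<and>
            matrix_inv (mahler_mat p F) ** A ** F = const_mat (mat_at0 A)) \<and>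
         (\<forall>F :: complex fps ^'n^'n. invertible F \<and> mat_at0 F = mat 1 \<and>
            matrix_inv (mahler_mat p F) ** A ** F = const_mat (mat_at0 A) \<longrightarrow>
          (\<forall>i j. convergent_fps (F $ i $ j)) \<and>
          (\<exists>G :: complex fps ^'n^'n. (\<forall>i j. convergent_fps (G $ i $ j)) \<and>
              F ** G = mat 1 \<and> G ** F = mat 1) \<and>
          ((\<forall>i j. rational_fps (A $ i $ j)) \<longrightarrow>
             (\<exists>g :: 'n \<Rightarrow> 'n \<Rightarrow> complex \<Rightarrow> complex.
                (\<forall>i j. g i j meromorphic_on ball 0 1 \<and>
                   (\<forall>\<^sub>F z in at 0. g i j z = eval_fps (F $ i $ j) z)) \<and>
                \<not> (\<forall>\<^sub>F z in at 0. det (\<chi> i j. g i j z) = 0))))"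
proof -
  let ?F = "mahler_solution p A"
  note solution = mahler_solution_solves[OF assms(1,4)]
  have convergent: "\<forall>i j. convergent_fps (?F $ i $ j)"
    using convergent_mahler_solution[OF assms(2)] by blast
  obtain G :: "complex fps^'n^'n" where
    "\<forall>i j. convergent_fps (G $ i $ j)" and "?F ** G = mat 1" and "G ** ?F = mat 1"
    using convergent_fps_mat_inverse[OF convergent, unfolded solution(1), OF invertible_mat_1]
    by blast
  moreover have "\<exists>g :: 'n \<Rightarrow> 'n \<Rightarrow> complex \<Rightarrow> complex.
      (\<forall>i j. g i j meromorphic_on ball 0 1 \<and> (\<forall>\<^sub>F z in at 0. g i j z = eval_fps (?F $ i $ j) z)) \<and>
      \<not> (\<forall>\<^sub>F z in at 0. det (\<chi> i j. g i j z) = 0)"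
    if rational: "\<forall>i j. rational_fps (A $ i $ j)"
  proof -
    obtain M :: "complex \<Rightarrow> complex^'n^'n" where "\<And>i j. (\<lambda>z. M z $ i $ j) meromorphic_on ball 0 1"
      and "\<forall>\<^sub>F z in at 0. M z = eval_fps_mat ?F z" and "\<not> (\<forall>\<^sub>F z in at 0. det (M z) = 0)"
      using mahler_solution_meromorphic[OF assms(1) rational assms(4) convergent solution] by blast
    then show ?thesis
      by (intro exI[of _ "\<lambda>i j z. M z $ i $ j"])
        (auto simp: eval_fps_mat_def vec_eq_iff elim: eventually_mono)
  qed
  ultimately show ?thesis
    unfolding mahler_normal_form_iff[OF assms(1,4)] using convergent by auto
qed

end
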